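(* There exists an I$^2$-GNN (a choice of $K$, $T$, $M_t$, $U_t$) such that for every graph $G=(V,E)$, every $i\in V$, every $j\in N(i)$ and every $k\in V_i$, $h^{(T)}_{i,j,k}$ equals the number of $4$-paths of the form $(i\to j\to\cdots\to k)$, i.e. the number of node sequences $i=v_1,\,v_2=j,\,v_3,\,v_4,\,v_5=k$ of pairwise distinct nodes with $(v_s,v_{s+1})\in E$ for $s=1,\dots,4$.
   Context: Graphs are finite, simple, undirected, $G=(V,E)$, possibly carrying node attributes $x_v$ and edge attributes $e_{u,v}$ (a fixed constant when absent); $N(v)$ is the neighbour set of $v$. I$^2$-GNN message passing: specified by an integer $K\ge1$, $T$, and arbitrary functions $M_t$ (values in some $\mathbb R^{d_t}$), $U_t$. For each root $i\in V$, $(V_i,E_i)$ is the subgraph of $G$ induced by nodes at shortest-path distance at most $K$ from $i$, and $N_i(k)=\{l\in V_i:(k,l)\in E_i\}$. For each $j\in N(i)$ and $k\in V_i$: $h^{(0)}_{i,j,k}=x_k\oplus\mathbb 1_{k=i}\oplus\mathbb 1_{k=j}$ ($\oplus$ = concatenation), and $h^{(t+1)}_{i,j,k}=U_t\big(h^{(t)}_{i,j,k},\sum_{l\in N_i(k)}M_t(h^{(t)}_{i,j,k},h^{(t)}_{i,j,l},e_{k,l})\big)$. *)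

theory Defs
  imports Complex_Main
begin

definition simple_graph :: "nat set \<Rightarrow> (nat \<times> nat) set \<Rightarrow> bool" where
  "simple_graph V E \<longleftrightarrow> finite V \<and> E \<subseteq> V \<times> V \<and> sym E \<and> irrefl E"

definition nbrs :: "(nat \<times> nat) set \<Rightarrow> nat \<Rightarrow> nat set" where
  "nbrs E v = {u. (v, u) \<in> E}"

definition khop :: "nat set \<Rightarrow> (nat \<times> nat) set \<Rightarrow> nat \<Rightarrow> nat \<Rightarrow> nat set" where
  "khop V E K i = {k \<in> V. \<exists>n\<le>K. (i, k) \<in> E ^^ n}"

definition sub_nbrs :: "nat set \<Rightarrow> (nat \<times> nat) set \<Rightarrow> nat \<Rightarrow> nat \<Rightarrow> nat \<Rightarrow> nat set" where
  "sub_nbrs V E K i k = {l \<in> khop V E K i. (k, l) \<in> E \<and> k \<in> khop V E K i}"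

text \<open>I^2-GNN hidden states h^(t)_{i,j,k}. M t takes values in R^(d t) (lists of length d t);
  the aggregated message is the componentwise sum over N_i(k).\<close>
primrec i2gnn ::
  "nat \<Rightarrow> (nat \<Rightarrow> nat) \<Rightarrow> (nat \<Rightarrow> real list \<Rightarrow> real list \<Rightarrow> 'e \<Rightarrow> real list)
   \<Rightarrow> (nat \<Rightarrow> real list \<Rightarrow> real list \<Rightarrow> real list)
   \<Rightarrow> nat set \<Rightarrow> (nat \<times> nat) set \<Rightarrow> (nat \<Rightarrow> real list) \<Rightarrow> (nat \<Rightarrow> nat \<Rightarrow> 'e)
   \<Rightarrow> nat \<Rightarrow> nat \<Rightarrow> nat \<Rightarrow> nat \<Rightarrow> real list" where
  "i2gnn K d M U V E x e i j 0 k = x k @ [of_bool (k = i), of_bool (k = j)]"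
| "i2gnn K d M U V E x e i j (Suc t) k =
     U t (i2gnn K d M U V E x e i j t k)
       (map (\<lambda>c. \<Sum>l\<in>sub_nbrs V E K i k.
                  M t (i2gnn K d M U V E x e i j t k) (i2gnn K d M U V E x e i j t l) (e k l) ! c)
            [0..<d t])"

definition num_4paths :: "(nat \<times> nat) set \<Rightarrow> nat \<Rightarrow> nat \<Rightarrow> nat \<Rightarrow> nat" where
  "num_4paths E i j k = card {p :: nat list. length p = 5 \<and> distinct p \<and>
     p ! 0 = i \<and> p ! 1 = j \<and> p ! 4 = k \<and> (\<forall>s<4. (p ! s, p ! Suc s) \<in> E)}"

end

theory Submission
  imports Defs
begin

text \<open>Three rounds of scalar messages suffice. Carrying the flags [v = i], [v = j] along,
  round one computes p2(v) = [v \<sim> j \<and> v \<noteq> i], the number of 2-paths i, j, v, and round two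
  sums p2 over the neighbours of v \<notin> {i, j}, giving the number p3(v) of 3-paths i, j, a, v.
  In round three node k must receive from each neighbour l the number of 3-paths i, j, a, l
  with a \<noteq> k. The only 3-path to l through k is i, j, k, l, which exists iff p2(k) = 1 and
  l \<notin> {i, j}; so the message p3(l) - p2(k) [l \<notin> {i, j}] is a function of the states of k
  and l. Summing it over l and zeroing k \<in> {i, j} counts the 4-paths. Every vertex of such a
  path lies within distance 3 of i, so restricting to the 4-hop subgraph loses nothing.
  Node features and edge attributes are never read.\<close>

definition path4_msg :: "nat \<Rightarrow> real list \<Rightarrow> real list \<Rightarrow> 'e \<Rightarrow> real list" where
  "path4_msg t h h' w =
     (case t of
        0 \<Rightarrow> [last h']
      | Suc 0 \<Rightarrow> [h' ! 2]
      | _ \<Rightarrow> [h' ! 3 - h ! 2 * (1 - h' ! 0) * (1 - h' ! 1)])"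

text \<open>The input state is x v @ [v = i, v = j], hence the indexing from the end in round 0.\<close>

definition path4_upd :: "nat \<Rightarrow> real list \<Rightarrow> real list \<Rightarrow> real list" where
  "path4_upd t h m =
     (case t of
        0 \<Rightarrow> [h ! (length h - 2), last h, (1 - h ! (length h - 2)) * m ! 0]
      | Suc 0 \<Rightarrow> h @ [(1 - h ! 0) * (1 - h ! 1) * m ! 0]
      | _ \<Rightarrow> [(1 - h ! 0) * (1 - h ! 1) * m ! 0])"

abbreviation path4_gnn ::
  "nat \<Rightarrow> nat set \<Rightarrow> (nat \<times> nat) set \<Rightarrow> (nat \<Rightarrow> real list) \<Rightarrow> (nat \<Rightarrow> nat \<Rightarrow> 'e)
   \<Rightarrow> nat \<Rightarrow> nat \<Rightarrow> nat \<Rightarrow> nat \<Rightarrow> real list" where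
  "path4_gnn K V E x e i j t v \<equiv> i2gnn K (\<lambda>_. 1) path4_msg path4_upd V E x e i j t v"

lemma i2gnn_Suc_scalar:
  "i2gnn K (\<lambda>_. 1) M U V E x e i j (Suc t) k =
     U t (i2gnn K (\<lambda>_. 1) M U V E x e i j t k)
       [\<Sum>l\<in>sub_nbrs V E K i k.
          M t (i2gnn K (\<lambda>_. 1) M U V E x e i j t k) (i2gnn K (\<lambda>_. 1) M U V E x e i j t l) (e k l) ! 0]"
  by simp

declare i2gnn.simps [simp del]

lemma path4_gnn_1:
  "path4_gnn K V E x e i j 1 v =
     [of_bool (v = i), of_bool (v = j),
      (1 - of_bool (v = i)) * (\<Sum>l\<in>sub_nbrs V E K i v. of_bool (l = j))]"
  by (simp add: i2gnn.simps path4_msg_def path4_upd_def nth_append)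

lemma path4_gnn_2:
  "path4_gnn K V E x e i j 2 v =
     path4_gnn K V E x e i j 1 v @
       [(1 - of_bool (v = i)) * (1 - of_bool (v = j)) *
        (\<Sum>a\<in>sub_nbrs V E K i v. path4_gnn K V E x e i j 1 a ! 2)]"
  unfolding i2gnn_Suc_scalar[where t = 1, unfolded Suc_1] path4_gnn_1
  by (simp add: path4_msg_def path4_upd_def)

lemma path4_gnn_3:
  "path4_gnn K V E x e i j 3 k =
     [(1 - of_bool (k = i)) * (1 - of_bool (k = j)) *
      (\<Sum>l\<in>sub_nbrs V E K i k. path4_gnn K V E x e i j 2 l ! 3 -
         path4_gnn K V E x e i j 1 k ! 2 * (1 - of_bool (l = i)) * (1 - of_bool (l = j)))]"
proof -
  have "Suc 2 = 3" by simp
  show ?thesis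
    unfolding i2gnn_Suc_scalar[where t = 2, unfolded \<open>Suc 2 = 3\<close>] path4_gnn_2 path4_gnn_1
    by (simp add: path4_msg_def path4_upd_def nth_append)
qed

definition path3_mids :: "(nat \<times> nat) set \<Rightarrow> nat \<Rightarrow> nat \<Rightarrow> nat \<Rightarrow> nat set" where
  "path3_mids E i j l = {a. distinct [i, j, a, l] \<and> (j, a) \<in> E \<and> (a, l) \<in> E}"

lemma real_card_Diff_singleton:
  assumes "finite A"
  shows "real (card (A - {a})) = real (card A) - of_bool (a \<in> A)"
proof (cases "a \<in> A")
  case True
  with assms have "card A = Suc (card (A - {a}))"
    by (rule card.remove)
  with True show ?thesis
    by simp
qed simp

lemma finite_nbrs: "finite E \<Longrightarrow> finite (nbrs E v)"
  unfolding nbrs_def by (rule finite_subset[of _ "snd ` E"]) force+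

lemma finite_path3_mids: "finite E \<Longrightarrow> finite (path3_mids E i j l)"
  by (rule finite_subset[OF _ finite_nbrs]) (auto simp: path3_mids_def nbrs_def)

lemma num_4paths_endpoint_eq_0:
  assumes "k = i \<or> k = j"
  shows "num_4paths E i j k = 0"
proof -
  have "{p. length p = 5 \<and> distinct p \<and> p ! 0 = i \<and> p ! 1 = j \<and> p ! 4 = k \<and>
           (\<forall>s<4. (p ! s, p ! Suc s) \<in> E)} = {}"
    using assms by (auto simp: nth_eq_iff_index_eq)
  then show ?thesis
    unfolding num_4paths_def by (metis card.empty)
qed

lemma num_4paths_eq_sum:
  assumes "finite E" "sym E" "irrefl E" "(i, j) \<in> E" "k \<noteq> i" "k \<noteq> j"
  shows "num_4paths E i j k = (\<Sum>l\<in>nbrs E k. card (path3_mids E i j l - {k}))"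
proof -
  let ?P = "{p. length p = 5 \<and> distinct p \<and> p ! 0 = i \<and> p ! 1 = j \<and> p ! 4 = k \<and>
              (\<forall>s<4. (p ! s, p ! Suc s) \<in> E)}"
  let ?S = "SIGMA l:nbrs E k. path3_mids E i j l - {k}"
  let ?path = "\<lambda>(l, a). [i, j, a, l, k]"
  have "?P = ?path ` ?S"
  proof (intro equalityI subsetI)
    fix p assume "p \<in> ?P"
    then show "p \<in> ?path ` ?S"
      using assms(2) by (auto simp: numeral_eq_Suc length_Suc_conv less_Suc_eq
          path3_mids_def nbrs_def image_iff sym_def)
  next
    fix p assume "p \<in> ?path ` ?S"
    then show "p \<in> ?P"
      using assms by (auto simp: numeral_eq_Suc less_Suc_eq path3_mids_def nbrs_def
          sym_def irrefl_def)
  qed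
  moreover have "inj_on ?path ?S"
    by (auto simp: inj_on_def)
  ultimately have "num_4paths E i j k = card ?S"
    unfolding num_4paths_def by (simp add: card_image)
  also have "\<dots> = (\<Sum>l\<in>nbrs E k. card (path3_mids E i j l - {k}))"
    using assms(1) by (simp add: finite_nbrs finite_path3_mids)
  finally show ?thesis .
qed

locale rooted_edge =
  fixes V :: "nat set" and E :: "(nat \<times> nat) set" and i j :: nat
  assumes graph: "simple_graph V E" and root: "i \<in> V" and edge: "(i, j) \<in> E"
begin

abbreviation Vi :: "nat set" where
  "Vi \<equiv> khop V E 4 i"

abbreviation Ni :: "nat \<Rightarrow> nat set" where
  "Ni \<equiv> sub_nbrs V E 4 i"

lemma finite_E: "finite E"
  using graph finite_subset[of E "V \<times> V"] by (auto simp: simple_graph_def)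

lemma edge_sym: "(a, b) \<in> E \<Longrightarrow> (b, a) \<in> E"
  using graph by (auto simp: simple_graph_def sym_def)

lemma edge_irrefl: "(a, a) \<notin> E"
  using graph by (auto simp: simple_graph_def irrefl_def)

lemma edge_in_V: "(a, b) \<in> E \<Longrightarrow> b \<in> V"
  using graph by (auto simp: simple_graph_def)

lemma relpow_in_Vi:
  assumes "(i, v) \<in> E ^^ n" "n \<le> 4"
  shows "v \<in> Vi"
proof -
  have "v \<in> V"
    using assms(1) root by (cases n) (auto dest: edge_in_V)
  then show ?thesis
    using assms unfolding khop_def by blast
qed

lemma walk_in_Vi:
  shows "j \<in> Vi"
    and "(j, a) \<in> E \<Longrightarrow> a \<in> Vi"
    and "(j, a) \<in> E \<Longrightarrow> (a, l) \<in> E \<Longrightarrow> l \<in> Vi"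
proof -
  have ij: "(i, j) \<in> E ^^ 1"
    using edge by simp
  then show "j \<in> Vi"
    by (rule relpow_in_Vi) simp
  have ia: "(i, a) \<in> E ^^ 2" if "(j, a) \<in> E" for a
    using relpow_Suc_I[OF ij that] by (simp add: numeral_2_eq_2)
  show "a \<in> Vi" if "(j, a) \<in> E"
    using relpow_in_Vi[OF ia[OF that]] by simp
  show "l \<in> Vi" if "(j, a) \<in> E" "(a, l) \<in> E"
    using relpow_in_Vi[OF relpow_Suc_I[OF ia that(2)]] that(1) by simp
qed

lemma Ni_eq: "v \<in> Vi \<Longrightarrow> Ni v = {l \<in> Vi. (v, l) \<in> E}"
  by (simp add: sub_nbrs_def)

lemma Ni_subset_Vi: "Ni v \<subseteq> Vi"
  by (auto simp: sub_nbrs_def)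

lemma finite_Ni: "finite (Ni v)"
  using graph by (auto simp: sub_nbrs_def khop_def simple_graph_def)

lemma path4_gnn_counts_2paths:
  assumes "v \<in> Vi"
  shows "path4_gnn 4 V E x e i j 1 v ! 2 = of_bool ((j, v) \<in> E \<and> v \<noteq> i)"
proof -
  have "(\<Sum>l\<in>Ni v. of_bool (l = j) :: real) = of_bool (j \<in> Ni v)"
    using finite_Ni[of v] by (simp add: of_bool_def sum.delta')
  also have "j \<in> Ni v \<longleftrightarrow> (j, v) \<in> E"
    using assms walk_in_Vi(1) edge_sym by (auto simp: Ni_eq)
  finally show ?thesis
    unfolding path4_gnn_1 by auto
qed

lemma path4_gnn_counts_3paths:
  assumes "v \<in> Vi"
  shows "path4_gnn 4 V E x e i j 2 v ! 3 = real (card (path3_mids E i j v))"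
proof (cases "v = i \<or> v = j")
  case True
  then have "path3_mids E i j v = {}"
    by (auto simp: path3_mids_def)
  with True show ?thesis
    unfolding path4_gnn_2 path4_gnn_1 by auto
next
  case False
  have "path3_mids E i j v = {a \<in> Ni v. (j, a) \<in> E \<and> a \<noteq> i}"
    using False assms walk_in_Vi(2) edge_sym edge_irrefl edge
    by (auto simp: path3_mids_def Ni_eq)
  moreover have "path4_gnn 4 V E x e i j 1 a ! 2 = of_bool ((j, a) \<in> E \<and> a \<noteq> i)" if "a \<in> Ni v" for a
    using that Ni_subset_Vi by (intro path4_gnn_counts_2paths) blast
  ultimately show ?thesis
    using False finite_Ni[of v] unfolding path4_gnn_2 path4_gnn_1 by (simp add: Int_def)
qed

lemma path4_gnn_counts_4paths:
  assumes "k \<in> Vi"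
  shows "path4_gnn 4 V E x e i j 3 k = [real (num_4paths E i j k)]"
proof (cases "k = i \<or> k = j")
  case True
  then show ?thesis
    unfolding path4_gnn_3 num_4paths_endpoint_eq_0[OF True] by auto
next
  case False
  have "path4_gnn 4 V E x e i j 2 l ! 3 -
          path4_gnn 4 V E x e i j 1 k ! 2 * (1 - of_bool (l = i)) * (1 - of_bool (l = j)) =
        real (card (path3_mids E i j l - {k}))" if "l \<in> Ni k" for l
  proof -
    have "(k, l) \<in> E" "l \<in> Vi"
      using that assms by (auto simp: Ni_eq)
    then have "of_bool (k \<in> path3_mids E i j l) =
               path4_gnn 4 V E x e i j 1 k ! 2 * (1 - of_bool (l = i)) * (1 - of_bool (l = j))"
      using False edge edge_irrefl path4_gnn_counts_2paths[OF assms, of x e] by (auto simp: path3_mids_def)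
    then show ?thesis
      using finite_path3_mids[OF finite_E] path4_gnn_counts_3paths[OF \<open>l \<in> Vi\<close>, of x e]
      by (simp add: real_card_Diff_singleton)
  qed
  then have "path4_gnn 4 V E x e i j 3 k = [\<Sum>l\<in>Ni k. real (card (path3_mids E i j l - {k}))]"
    using False unfolding path4_gnn_3 by simp
  also have "(\<Sum>l\<in>Ni k. real (card (path3_mids E i j l - {k}))) =
             (\<Sum>l\<in>nbrs E k. real (card (path3_mids E i j l - {k})))"
  proof (rule sum.mono_neutral_left)
    show "finite (nbrs E k)"
      using finite_E by (rule finite_nbrs)
    show "Ni k \<subseteq> nbrs E k"
      by (auto simp: sub_nbrs_def nbrs_def)
    show "\<forall>l\<in>nbrs E k - Ni k. real (card (path3_mids E i j l - {k})) = 0"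
    proof
      fix l assume "l \<in> nbrs E k - Ni k"
      then have "l \<notin> Vi"
        using assms by (auto simp: nbrs_def Ni_eq)
      then have "path3_mids E i j l = {}"
        using walk_in_Vi(3) by (auto simp: path3_mids_def)
      then show "real (card (path3_mids E i j l - {k})) = 0"
        by simp
    qed
  qed
  also have "\<dots> = real (num_4paths E i j k)"
    using graph False edge finite_E
    by (simp add: num_4paths_eq_sum simple_graph_def)
  finally show ?thesis .
qed

end

theorem lemma3:
  fixes dx :: nat
  shows "\<exists>(K::nat) (T::nat) (d::nat \<Rightarrow> nat)
            (M::nat \<Rightarrow> real list \<Rightarrow> real list \<Rightarrow> 'e \<Rightarrow> real list)
            (U::nat \<Rightarrow> real list \<Rightarrow> real list \<Rightarrow> real list).
           K \<ge> 1 \<and> (\<forall>t a b w. length (M t a b w) = d t) \<and>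
           (\<forall>V E (x::nat \<Rightarrow> real list) (e::nat \<Rightarrow> nat \<Rightarrow> 'e) i j k.
              simple_graph V E \<longrightarrow> (\<forall>v. length (x v) = dx) \<longrightarrow>
              (\<forall>u v. e u v = e v u) \<longrightarrow>
              i \<in> V \<longrightarrow> j \<in> nbrs E i \<longrightarrow> k \<in> khop V E K i \<longrightarrow>
              i2gnn K d M U V E x e i j T k = [real (num_4paths E i j k)])"
proof (intro exI conjI allI impI)
  show "(1::nat) \<le> 4" by simp
  show "length (path4_msg t a b w) = (\<lambda>_. 1) t" for t a b w
    by (simp add: path4_msg_def split: nat.split)
  fix V E and x :: "nat \<Rightarrow> real list" and e :: "nat \<Rightarrow> nat \<Rightarrow> 'e" and i j k
  assume "simple_graph V E" "i \<in> V" "j \<in> nbrs E i" "k \<in> khop V E 4 i"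
  then interpret rooted_edge V E i j
    by unfold_locales (simp_all add: nbrs_def)
  show "path4_gnn 4 V E x e i j 3 k = [real (num_4paths E i j k)]"
    using \<open>k \<in> khop V E 4 i\<close> by (rule path4_gnn_counts_4paths)
qed

end
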